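(* Let $X_m$ be a space of labelled lines and let $T_n$ be an $n$-rule map on $X_m$ with defining rule sequence $r_1,\dots,r_n$, $r_i=r(\,\cdot\,;\theta_i,o_i,L_{a_i})$, and let $c_1,\dots,c_n$ be the similarity coefficients of the rules and $C=c_1c_2\cdots c_n$ the similarity coefficient of the induced map $\hat T_n=T_n^n$. If $0\le C<1$, then $T_n$ admits a unique periodic orbit of period $n$.
   Context: $X_m\subset\mathbb{R}^2$ is a union of $m\ge3$ lines, labelled $L_1,\dots,L_m$, not all concurrent, with at least one line neither parallel nor perpendicular to any other. For a point $x$ on a line of $X_m$, a line $L_j$ of $X_m$, and $\theta\in(0,\pi/2)$, there are two lines through $x$ meeting $L_j$ at angle $\theta$; their intersection points with $L_j$ are the orientation $0$ and orientation $1$, angle $\theta$ projections of $x$ onto $L_j$ (the labels $0,1$ being assigned by the fixed convention "left" and "right" projection as seen from $x$, under which, for fixed $\theta$ and orientation, the projection from one line onto another is a projection along a fixed direction); for $\theta=\pi/2$ there is a single (perpendicular) projection; if $x\in L_j$ its projection is $x$. A rule $r(x;\theta,o,L_j)$ maps $x\in X_m$ to its angle $\theta$, orientation $o$ projection onto $L_j$ ($\theta\in(0,\pi/2]$, $o\in\{0,1\}$). A rule sequence is a sequence of $n\ge m$ rules $r_1,\dots,r_n$ such that consecutive rules, including $r_n$ and $r_1$, map onto different lines, and every line of $X_m$ is mapped onto by at least one rule. The $n$-rule map $T_n:X_m\to X_m$ is iterated by cycling through the rules: the $k$-th iterate applies $r_{((k-1)\bmod n)+1}$ to the $(k-1)$-th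 iterate, so e.g. $T_n^{n+2}(x)=r_2(r_1(r_n(\cdots r_2(r_1(x)))))$. $T_n$ is assumed non-redundant (there is no rule sequence of length $n'$ with $m\le n'<n$ giving the same orbits for all $x$). The orbit of $x$ is $\{x,T_n(x),T_n^2(x),\dots\}$. With $a_0:=a_n$, the restriction of $r_i$ to $L_{a_{i-1}}$ (mapping into $L_{a_i}$) satisfies $d(r_i(x),r_i(y))=c_i\,d(x,y)$ for all $x,y\in L_{a_{i-1}}$, for a constant $c_i\ge0$ ($d$ the Euclidean metric); $c_i$ is the similarity coefficient of $r_i$. The induced map $\hat T_n=T_n^n$ maps $L_{a_n}$ to itself. *)

theory Defs
  imports "HOL-Analysis.Analysis"
begin

text \<open>The plane is modelled as the complex numbers (Euclidean metric = dist on complex).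
  Line j of the configuration is {P j + t * U j | t real}, with U j a nonzero direction.\<close>

definition cross2 :: "complex \<Rightarrow> complex \<Rightarrow> real" where
  "cross2 a b = Im (cnj a * b)"

definition lline :: "(nat \<Rightarrow> complex) \<Rightarrow> (nat \<Rightarrow> complex) \<Rightarrow> nat \<Rightarrow> complex set" where
  "lline P U j = {P j + of_real t * U j | t. True}"

definition Xspace :: "(nat \<Rightarrow> complex) \<Rightarrow> (nat \<Rightarrow> complex) \<Rightarrow> nat \<Rightarrow> complex set" where
  "Xspace P U m = (\<Union>j<m. lline P U j)"

text \<open>Projection of x onto the line through p with direction u, along direction w
  (w not parallel to u). If x lies on the line, the result is x.\<close>
definition proj_along :: "complex \<Rightarrow> complex \<Rightarrow> complex \<Rightarrow> complex \<Rightarrow> complex" where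
  "proj_along p u w x = p + of_real (cross2 (x - p) w / cross2 u w) * u"

text \<open>Rule r(x; theta, ori, L_j): the line through x meeting L_j at angle theta, with
  direction U j rotated by +theta (orientation False = 0) or -theta (orientation True = 1).
  For theta = pi/2 both orientations give the perpendicular projection.\<close>
definition rule :: "(nat \<Rightarrow> complex) \<Rightarrow> (nat \<Rightarrow> complex) \<Rightarrow> real \<Rightarrow> bool \<Rightarrow> nat \<Rightarrow> complex \<Rightarrow> complex" where
  "rule P U \<theta> ori j x = proj_along (P j) (U j) (U j * cis (if ori then - \<theta> else \<theta>)) x"

definition is_rule_seq :: "nat \<Rightarrow> nat \<Rightarrow> (nat \<Rightarrow> real) \<Rightarrow> (nat \<Rightarrow> bool) \<Rightarrow> (nat \<Rightarrow> nat) \<Rightarrow> bool" where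
  "is_rule_seq m n \<theta> ori a \<longleftrightarrow>
     m \<le> n \<and>
     (\<forall>i\<in>{1..n}. a i < m \<and> 0 < \<theta> i \<and> \<theta> i \<le> pi / 2) \<and>
     (\<forall>i\<in>{1..<n}. a i \<noteq> a (Suc i)) \<and> a n \<noteq> a 1 \<and>
     (\<forall>j<m. \<exists>i\<in>{1..n}. a i = j)"

text \<open>k-th iterate of the n-rule map: the k-th step applies rule number ((k-1) mod n)+1.\<close>
primrec Titer :: "(nat \<Rightarrow> complex) \<Rightarrow> (nat \<Rightarrow> complex) \<Rightarrow> nat \<Rightarrow> (nat \<Rightarrow> real) \<Rightarrow> (nat \<Rightarrow> bool)
    \<Rightarrow> (nat \<Rightarrow> nat) \<Rightarrow> nat \<Rightarrow> complex \<Rightarrow> complex" where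
  "Titer P U n \<theta> ori a 0 x = x"
| "Titer P U n \<theta> ori a (Suc k) x =
     (let i = k mod n + 1 in rule P U (\<theta> i) (ori i) (a i) (Titer P U n \<theta> ori a k x))"

definition orbit :: "(nat \<Rightarrow> complex) \<Rightarrow> (nat \<Rightarrow> complex) \<Rightarrow> nat \<Rightarrow> (nat \<Rightarrow> real) \<Rightarrow> (nat \<Rightarrow> bool)
    \<Rightarrow> (nat \<Rightarrow> nat) \<Rightarrow> complex \<Rightarrow> complex set" where
  "orbit P U n \<theta> ori a x = range (\<lambda>k. Titer P U n \<theta> ori a k x)"

end

theory Submission
  imports Defs
begin

text \<open>The last rule of every cycle projects onto \<open>L\<^sub>a\<^sub>n\<close>, so \<open>T\<^sub>n\<^sup>n\<close> maps all of \<open>X\<^sub>m\<close> into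
  that line; on the line, composing the similarities shows that \<open>T\<^sub>n\<^sup>n\<close> scales distances
  by \<open>C = c\<^sub>1\<cdots>c\<^sub>n < 1\<close>. Banach's fixed point theorem on the closed line gives a unique
  fixed point there, and every fixed point in \<open>X\<^sub>m\<close> lies in the image of \<open>T\<^sub>n\<^sup>n\<close>, hence on
  the line.\<close>

lemma unique_fixpoint_of_contraction_into_subset:
  fixes f :: "'a::metric_space \<Rightarrow> 'a"
  assumes "complete L" "L \<noteq> {}" "L \<subseteq> X" "f ` X \<subseteq> L"
    and "0 \<le> C" "C < 1"
    and "\<And>x y. x \<in> L \<Longrightarrow> y \<in> L \<Longrightarrow> dist (f x) (f y) \<le> C * dist x y"
  shows "\<exists>!x. x \<in> X \<and> f x = x"
proof -
  have "\<exists>!x\<in>L. f x = x"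
    using Banach_fix[of L C f] assms by blast
  moreover have "x \<in> L" if "x \<in> X" "f x = x" for x
    using that \<open>f ` X \<subseteq> L\<close> by (metis image_subset_iff)
  ultimately show ?thesis
    using \<open>L \<subseteq> X\<close> by blast
qed

lemma closed_lline: "closed (lline P U j)"
proof -
  have "lline P U j = (+) (P j) ` span {U j}"
    by (auto simp: lline_def span_singleton scaleR_conv_of_real image_iff)
  then show ?thesis
    by (simp add: closed_translation closed_subspace)
qed

lemma lline_nonempty: "lline P U j \<noteq> {}"
  by (auto simp: lline_def)

lemma lline_subset_Xspace: "j < m \<Longrightarrow> lline P U j \<subseteq> Xspace P U m"
  by (auto simp: Xspace_def)

lemma rule_in_lline: "rule P U \<theta> ori j x \<in> lline P U j"
  unfolding rule_def proj_along_def lline_def by blast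

lemma Titer_Suc_in_lline: "Titer P U n \<theta> ori a (Suc k) x \<in> lline P U (a (k mod n + 1))"
  by (simp add: Let_def rule_in_lline)

lemma Titer_in_lline:
  assumes "k \<le> n" "x \<in> lline P U (a n)"
  shows "Titer P U n \<theta> ori a k x \<in> lline P U (a (if k = 0 then n else k))"
proof (cases k)
  case (Suc k')
  then have "k' mod n + 1 = k"
    using \<open>k \<le> n\<close> by simp
  then show ?thesis
    using Titer_Suc_in_lline[of P U n \<theta> ori a k' x] Suc by simp
qed (use assms in simp)

lemma dist_Titer:
  assumes simil: "\<And>i x y. i \<in> {1..n} \<Longrightarrow>
      x \<in> lline P U (a (if i = 1 then n else i - 1)) \<Longrightarrow>
      y \<in> lline P U (a (if i = 1 then n else i - 1)) \<Longrightarrow>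
      dist (rule P U (\<theta> i) (ori i) (a i) x) (rule P U (\<theta> i) (ori i) (a i) y) = c i * dist x y"
    and x: "x \<in> lline P U (a n)" and y: "y \<in> lline P U (a n)"
  shows "k \<le> n \<Longrightarrow>
    dist (Titer P U n \<theta> ori a k x) (Titer P U n \<theta> ori a k y) = (\<Prod>i=1..k. c i) * dist x y"
proof (induction k)
  case (Suc k)
  then have "k < n" by simp
  let ?line = "lline P U (a (if k = 0 then n else k))"
  have "Titer P U n \<theta> ori a k x \<in> ?line" "Titer P U n \<theta> ori a k y \<in> ?line"
    using Titer_in_lline[of k n x] Titer_in_lline[of k n y] x y \<open>k < n\<close> by simp_all
  then have "dist (Titer P U n \<theta> ori a (Suc k) x) (Titer P U n \<theta> ori a (Suc k) y)
      = c (Suc k) * dist (Titer P U n \<theta> ori a k x) (Titer P U n \<theta> ori a k y)"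
    using simil[of "Suc k"] \<open>k < n\<close> by (simp add: Let_def cong: if_cong)
  also have "\<dots> = (\<Prod>i=1..Suc k. c i) * dist x y"
    using Suc \<open>k < n\<close> by (simp add: prod.nat_ivl_Suc' mult_ac)
  finally show ?case .
qed simp

theorem theorem2:
  fixes P U :: "nat \<Rightarrow> complex" and m n :: nat
    and \<theta> :: "nat \<Rightarrow> real" and ori :: "nat \<Rightarrow> bool" and a :: "nat \<Rightarrow> nat"
    and c :: "nat \<Rightarrow> real"
  assumes m3: "m \<ge> 3"
    and dirs: "\<forall>j<m. U j \<noteq> 0"
    and distinct_lines: "\<forall>j<m. \<forall>k<m. j \<noteq> k \<longrightarrow> lline P U j \<noteq> lline P U k"
    and not_concurrent: "\<not> (\<exists>q. \<forall>j<m. q \<in> lline P U j)"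
    and generic: "\<exists>j<m. \<forall>k<m. k \<noteq> j \<longrightarrow>
                     cross2 (U j) (U k) \<noteq> 0 \<and> Re (cnj (U j) * U k) \<noteq> 0"
    and rseq: "is_rule_seq m n \<theta> ori a"
    and nonredundant: "\<not> (\<exists>n' \<theta>' ori' a'. n' < n \<and> is_rule_seq m n' \<theta>' ori' a' \<and>
                        (\<forall>x\<in>Xspace P U m. orbit P U n' \<theta>' ori' a' x = orbit P U n \<theta> ori a x))"
    and simil: "\<forall>i\<in>{1..n}. c i \<ge> 0 \<and>
                  (\<forall>x\<in>lline P U (a (if i = 1 then n else i - 1)).
                   \<forall>y\<in>lline P U (a (if i = 1 then n else i - 1)).
                     dist (rule P U (\<theta> i) (ori i) (a i) x) (rule P U (\<theta> i) (ori i) (a i) y)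
                       = c i * dist x y)"
    and contr: "0 \<le> (\<Prod>i=1..n. c i)" "(\<Prod>i=1..n. c i) < 1"
  shows "\<exists>!x. x \<in> Xspace P U m \<and> Titer P U n \<theta> ori a n x = x"
proof (rule unique_fixpoint_of_contraction_into_subset[OF _ lline_nonempty _ _ contr])
  have "1 \<le> n" "a n < m"
    using rseq m3 unfolding is_rule_seq_def by auto
  then show "lline P U (a n) \<subseteq> Xspace P U m"
    by (simp add: lline_subset_Xspace)
  obtain k where "n = Suc k"
    using \<open>1 \<le> n\<close> by (cases n) auto
  then show "Titer P U n \<theta> ori a n ` Xspace P U m \<subseteq> lline P U (a n)"
    using Titer_Suc_in_lline[of P U n \<theta> ori a k] by auto
  show "complete (lline P U (a n))"
    by (simp add: complete_eq_closed closed_lline)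
  show "dist (Titer P U n \<theta> ori a n x) (Titer P U n \<theta> ori a n y) \<le> (\<Prod>i=1..n. c i) * dist x y"
    if "x \<in> lline P U (a n)" "y \<in> lline P U (a n)" for x y
    using dist_Titer[of n P U a \<theta> ori c x y n] simil that by simp
qed

end
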